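(* Let $d\ge2$, $1<p<d$, $\beta=\frac{p-1}{2p}$, $0<\delta<1/20$, $0<\varepsilon<\delta/20$. Let $S\subset\mathbb S^{d-1}$ be finite with pairwise distances at least $\varepsilon$, $K_s\subset\bar B(0,1)$ compact, $0<\alpha\le1/80$, $\Gamma=\bigcup_{s\in S}(s+\alpha\varepsilon K_s)$, and $u$ the Perron solution of $\Delta_pu=0$ in $\mathbb R^d\setminus\Gamma$, $u=1$ on $\Gamma$, $u\to0$ at $\infty$. There is $C_7=C_7(d,p)$ such that if $y\in\mathbb S^{d-1}$ and $M>0$ satisfy $\int_{\Lambda_{2\delta}(y)}|\nabla u|^p\le M\delta^{d-1}$, then the set $S_\beta$ of bad anchors satisfies $$|S_\beta\cap Q_\delta(y)|\le C_7M\delta^\beta(\delta/\varepsilon)^{d-1}.$$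
   Context: $Q_\zeta(y)=B(y,\zeta)\cap\mathbb S^{d-1}$, $\Lambda_\zeta(y)=\{rq:q\in Q_\zeta(y),r>0\}$. An anchor $s\in S$ is good if $\int_{\Lambda_\zeta(s)}|\nabla u|^p\le\zeta^{d-1-\beta}$ for all $\zeta\in[\varepsilon,\delta]$, and bad otherwise. Perron solution in the sense of nonlinear potential theory. *)

theory Defs
  imports "HOL-Analysis.Analysis" "HOL-Library.Liminf_Limsup"
begin

definition test_fun :: "'a::euclidean_space set \<Rightarrow> ('a \<Rightarrow> real) \<Rightarrow> ('a \<Rightarrow> 'a \<Rightarrow> real) \<Rightarrow> bool" where
  "test_fun U \<phi> \<phi>' \<longleftrightarrow>
     (\<forall>x. (\<phi> has_derivative \<phi>' x) (at x)) \<and>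
     (\<forall>v. continuous_on UNIV (\<lambda>x. \<phi>' x v)) \<and>
     compact (closure {x. \<phi> x \<noteq> 0}) \<and> closure {x. \<phi> x \<noteq> 0} \<subseteq> U"

definition weak_gradient :: "'a::euclidean_space set \<Rightarrow> ('a \<Rightarrow> real) \<Rightarrow> ('a \<Rightarrow> 'a) \<Rightarrow> bool" where
  "weak_gradient U u g \<longleftrightarrow>
     set_borel_measurable lborel U u \<and> set_borel_measurable lborel U g \<and>
     (\<forall>K. compact K \<and> K \<subseteq> U \<longrightarrow> set_integrable lborel K u \<and> set_integrable lborel K g) \<and>
     (\<forall>\<phi> \<phi>'. test_fun U \<phi> \<phi>' \<longrightarrow>
        (\<forall>i\<in>Basis. (LINT x:U|lborel. u x * \<phi>' x i) = - (LINT x:U|lborel. (g x \<bullet> i) * \<phi> x)))"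

definition sobolev_loc :: "real \<Rightarrow> 'a::euclidean_space set \<Rightarrow> ('a \<Rightarrow> real) \<Rightarrow> ('a \<Rightarrow> 'a) \<Rightarrow> bool" where
  "sobolev_loc p U u g \<longleftrightarrow> weak_gradient U u g \<and>
     (\<forall>K. compact K \<and> K \<subseteq> U \<longrightarrow>
        set_integrable lborel K (\<lambda>x. \<bar>u x\<bar> powr p) \<and>
        set_integrable lborel K (\<lambda>x. norm (g x) powr p))"

text \<open>Continuous weak solutions of the p-Laplace equation div(|Du|^{p-2} Du) = 0 in U.\<close>
definition p_harmonic :: "real \<Rightarrow> 'a::euclidean_space set \<Rightarrow> ('a \<Rightarrow> real) \<Rightarrow> bool" where
  "p_harmonic p U u \<longleftrightarrow> continuous_on U u \<and>
     (\<exists>g. sobolev_loc p U u g \<and>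
        (\<forall>\<phi> \<phi>'. test_fun U \<phi> \<phi>' \<longrightarrow>
           (LINT x:U|lborel. norm (g x) powr (p - 2) * \<phi>' x (g x)) = 0))"

definition p_superharmonic :: "real \<Rightarrow> 'a::euclidean_space set \<Rightarrow> ('a \<Rightarrow> ereal) \<Rightarrow> bool" where
  "p_superharmonic p U v \<longleftrightarrow>
     (\<forall>x\<in>U. v x > -\<infinity> \<and> v x \<le> Liminf (at x) v) \<and>
     (\<forall>C\<in>components U. \<exists>x\<in>C. v x < \<infinity>) \<and>
     (\<forall>D h. open D \<and> compact (closure D) \<and> closure D \<subseteq> U \<and>
        continuous_on (closure D) h \<and> p_harmonic p D h \<and>
        (\<forall>x\<in>frontier D. ereal (h x) \<le> v x) \<longrightarrow> (\<forall>x\<in>D. ereal (h x) \<le> v x))"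

definition upper_class :: "real \<Rightarrow> 'a::euclidean_space set \<Rightarrow> ('a \<Rightarrow> real) \<Rightarrow> real \<Rightarrow> ('a \<Rightarrow> ereal) set" where
  "upper_class p \<Omega> f finf = {v. p_superharmonic p \<Omega> v \<and>
      (\<exists>c. \<forall>x\<in>\<Omega>. ereal c \<le> v x) \<and>
      (\<forall>\<xi>\<in>frontier \<Omega>. ereal (f \<xi>) \<le> Liminf (at \<xi> within \<Omega>) v) \<and>
      (\<not> bounded \<Omega> \<longrightarrow> ereal finf \<le> Liminf (inf at_infinity (principal \<Omega>)) v)}"

definition upper_perron :: "real \<Rightarrow> 'a::euclidean_space set \<Rightarrow> ('a \<Rightarrow> real) \<Rightarrow> real \<Rightarrow> 'a \<Rightarrow> ereal" where
  "upper_perron p \<Omega> f finf x = (INF v\<in>upper_class p \<Omega> f finf. v x)"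

definition lower_perron :: "real \<Rightarrow> 'a::euclidean_space set \<Rightarrow> ('a \<Rightarrow> real) \<Rightarrow> real \<Rightarrow> 'a \<Rightarrow> ereal" where
  "lower_perron p \<Omega> f finf x = - upper_perron p \<Omega> (\<lambda>y. - f y) (- finf) x"

definition perron_solution :: "real \<Rightarrow> 'a::euclidean_space set \<Rightarrow> ('a \<Rightarrow> real) \<Rightarrow> real \<Rightarrow> ('a \<Rightarrow> real) \<Rightarrow> bool" where
  "perron_solution p \<Omega> f finf u \<longleftrightarrow>
     (\<forall>x\<in>\<Omega>. upper_perron p \<Omega> f finf x = ereal (u x) \<and> lower_perron p \<Omega> f finf x = ereal (u x))"

definition capQ :: "'a::euclidean_space \<Rightarrow> real \<Rightarrow> 'a set" where
  "capQ y \<zeta> = ball y \<zeta> \<inter> sphere 0 1"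

definition coneL :: "'a::euclidean_space \<Rightarrow> real \<Rightarrow> 'a set" where
  "coneL y \<zeta> = {r *\<^sub>R q | r q. q \<in> capQ y \<zeta> \<and> r > 0}"

definition Gamma_set :: "'a::euclidean_space set \<Rightarrow> ('a \<Rightarrow> 'a set) \<Rightarrow> real \<Rightarrow> real \<Rightarrow> 'a set" where
  "Gamma_set S K \<alpha> \<epsilon> = (\<Union>s\<in>S. (\<lambda>k. s + (\<alpha> * \<epsilon>) *\<^sub>R k) ` K s)"

text \<open>Energy of u in the cone, computed with the weak gradient g of u on the complement
  \<Omega> of \<Gamma> (on \<Gamma> we have u = 1, hence Du = 0 a.e. there).\<close>
definition cone_energy :: "real \<Rightarrow> 'a::euclidean_space set \<Rightarrow> ('a \<Rightarrow> 'a) \<Rightarrow> 'a \<Rightarrow> real \<Rightarrow> ennreal" where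
  "cone_energy p \<Omega> g y \<zeta> = (\<integral>\<^sup>+ x. indicator (coneL y \<zeta> \<inter> \<Omega>) x * ennreal (norm (g x) powr p) \<partial>lborel)"

definition bad_anchors :: "real \<Rightarrow> 'a::euclidean_space set \<Rightarrow> ('a \<Rightarrow> 'a) \<Rightarrow> 'a set \<Rightarrow> real \<Rightarrow> real \<Rightarrow> real \<Rightarrow> 'a set" where
  "bad_anchors p \<Omega> g S \<epsilon> \<delta> \<beta> =
     {s\<in>S. \<exists>\<zeta>\<in>{\<epsilon>..\<delta>}. cone_energy p \<Omega> g s \<zeta> > ennreal (\<zeta> powr (real DIM('a) - 1 - \<beta>))}"

end

theory Submission
  imports Defs
begin

(*
  Every bad anchor s has a scale \<zeta> \<in> [\<epsilon>, \<delta>] at which the cone \<Lambda>\<^sub>\<zeta>(s) carries energy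
  more than \<zeta>^(d-1-\<beta>). By the Vitali covering lemma there are bad anchors s\<^sub>i in Q\<^sub>\<delta>(y)
  with pairwise disjoint balls B(s\<^sub>i, \<zeta>\<^sub>i) whose 5-fold enlargements cover all bad anchors
  in Q\<^sub>\<delta>(y). Their cones are disjoint and lie in \<Lambda>\<^sub>2\<^sub>\<delta>(y), so
  \<Sum>\<^sub>i \<zeta>\<^sub>i^(d-1-\<beta>) \<le> M \<delta>^(d-1). An \<epsilon>-separated subset of the unit sphere has at most
  C (R/\<epsilon>)^(d-1) points in a ball of radius R \<ge> \<epsilon>, and \<zeta>\<^sub>i^(d-1) \<le> \<delta>^\<beta> \<zeta>\<^sub>i^(d-1-\<beta>);
  summing over i gives the bound.
*)

(* 2 d charts (dominant axis and its sign), each with at most (3 R / w)^(d-1) grid cells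
   of mesh w = \<epsilon> / (d (d + 1)) in the remaining coordinates. *)
definition packing_const :: "nat \<Rightarrow> real" where
  "packing_const d = 2 * real d * (3 * real d * (real d + 1)) ^ (d - 1)"

lemma packing_const_nonneg: "0 \<le> packing_const d"
  by (simp add: packing_const_def)

lemma power2_inner_Basis_diff_eq:
  fixes s t e :: "'a::euclidean_space"
  assumes "norm s = norm t" "e \<in> Basis"
  shows "(s \<bullet> e)\<^sup>2 - (t \<bullet> e)\<^sup>2 = (\<Sum>b\<in>Basis - {e}. (t \<bullet> b)\<^sup>2 - (s \<bullet> b)\<^sup>2)"
proof -
  have norm_sq: "(norm x)\<^sup>2 = (x \<bullet> e)\<^sup>2 + (\<Sum>b\<in>Basis - {e}. (x \<bullet> b)\<^sup>2)" for x :: 'a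
  proof -
    have "(norm x)\<^sup>2 = x \<bullet> x"
      by (rule power2_norm_eq_inner)
    also have "\<dots> = (\<Sum>b\<in>Basis. (x \<bullet> b)\<^sup>2)"
      by (simp add: euclidean_inner[of x x] power2_eq_square)
    finally show ?thesis
      using assms(2) by (simp add: sum.remove)
  qed
  have "(s \<bullet> e)\<^sup>2 + (\<Sum>b\<in>Basis - {e}. (s \<bullet> b)\<^sup>2) = (t \<bullet> e)\<^sup>2 + (\<Sum>b\<in>Basis - {e}. (t \<bullet> b)\<^sup>2)"
    using norm_sq[of s] norm_sq[of t] assms(1) by metis
  then show ?thesis
    by (simp add: sum_subtractf algebra_simps)
qed

lemma exists_max_abs_coord:
  fixes s :: "'a::euclidean_space"
  obtains e where "e \<in> Basis" "\<forall>b\<in>Basis. \<bar>s \<bullet> b\<bar> \<le> \<bar>s \<bullet> e\<bar>"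
proof -
  have "Max ((\<lambda>b. \<bar>s \<bullet> b\<bar>) ` Basis) \<in> (\<lambda>b. \<bar>s \<bullet> b\<bar>) ` Basis"
    by (rule Max_in) auto
  then obtain e where "e \<in> Basis" "Max ((\<lambda>b. \<bar>s \<bullet> b\<bar>) ` Basis) = \<bar>s \<bullet> e\<bar>"
    by blast
  moreover have "\<forall>b\<in>Basis. \<bar>s \<bullet> b\<bar> \<le> Max ((\<lambda>b. \<bar>s \<bullet> b\<bar>) ` Basis)"
    by (auto intro: Max_ge)
  ultimately show thesis
    using that by metis
qed

lemma max_abs_coord_ge:
  fixes s e :: "'a::euclidean_space"
  assumes "norm s = 1" "e \<in> Basis" "\<And>b. b \<in> Basis \<Longrightarrow> \<bar>s \<bullet> b\<bar> \<le> \<bar>s \<bullet> e\<bar>"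
  shows "1 / real DIM('a) \<le> \<bar>s \<bullet> e\<bar>"
proof -
  have "1 \<le> (\<Sum>b\<in>Basis. \<bar>s \<bullet> b\<bar>)"
    using norm_le_l1[of s] assms(1) by simp
  also have "\<dots> \<le> (\<Sum>b\<in>(Basis::'a set). \<bar>s \<bullet> e\<bar>)"
    by (rule sum_mono) (rule assms(3))
  also have "\<dots> = real DIM('a) * \<bar>s \<bullet> e\<bar>"
    by simp
  finally show ?thesis
    by (simp add: field_simps)
qed

lemma abs_diff_axis_coord_le:
  fixes s t e :: "'a::euclidean_space"
  assumes s: "norm s = 1" and t: "norm t = 1" and e: "e \<in> Basis"
    and same_sign: "0 < (s \<bullet> e) * (t \<bullet> e)"
    and s_large: "1 / real DIM('a) \<le> \<bar>s \<bullet> e\<bar>" and t_large: "1 / real DIM('a) \<le> \<bar>t \<bullet> e\<bar>"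
    and close: "\<And>b. b \<in> Basis - {e} \<Longrightarrow> \<bar>s \<bullet> b - t \<bullet> b\<bar> \<le> w"
  shows "\<bar>s \<bullet> e - t \<bullet> e\<bar> \<le> real DIM('a) * (real DIM('a) - 1) * w"
proof -
  have card_rest: "real (card (Basis - {e})) = real DIM('a) - 1"
    using e by (simp add: card_Diff_singleton of_nat_diff Suc_leI)
  have "\<bar>s \<bullet> e - t \<bullet> e\<bar> * \<bar>s \<bullet> e + t \<bullet> e\<bar> = \<bar>(s \<bullet> e)\<^sup>2 - (t \<bullet> e)\<^sup>2\<bar>"
    by (simp add: abs_mult[symmetric] power2_eq_square algebra_simps)
  also have "\<dots> = \<bar>\<Sum>b\<in>Basis - {e}. (t \<bullet> b)\<^sup>2 - (s \<bullet> b)\<^sup>2\<bar>"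
    using s t e by (simp add: power2_inner_Basis_diff_eq)
  also have "\<dots> \<le> (\<Sum>b\<in>Basis - {e}. \<bar>(t \<bullet> b)\<^sup>2 - (s \<bullet> b)\<^sup>2\<bar>)"
    by (rule sum_abs)
  also have "\<dots> \<le> (\<Sum>b\<in>Basis - {e}. w * 2)"
  proof (rule sum_mono)
    fix b assume b: "b \<in> Basis - {e}"
    have "\<bar>t \<bullet> b\<bar> \<le> 1" "\<bar>s \<bullet> b\<bar> \<le> 1"
      using Basis_le_norm[of b t] Basis_le_norm[of b s] b s t by auto
    then have "\<bar>t \<bullet> b - s \<bullet> b\<bar> * \<bar>t \<bullet> b + s \<bullet> b\<bar> \<le> w * 2"
      using close[OF b] by (intro mult_mono) (auto simp: abs_minus_commute)
    then show "\<bar>(t \<bullet> b)\<^sup>2 - (s \<bullet> b)\<^sup>2\<bar> \<le> w * 2"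
      by (simp add: abs_mult[symmetric] power2_eq_square algebra_simps)
  qed
  also have "\<dots> = 2 * (real DIM('a) - 1) * w"
    using card_rest by simp
  finally have bound: "\<bar>s \<bullet> e - t \<bullet> e\<bar> * \<bar>s \<bullet> e + t \<bullet> e\<bar> \<le> 2 * (real DIM('a) - 1) * w" .
  have "2 / real DIM('a) \<le> \<bar>s \<bullet> e + t \<bullet> e\<bar>"
    using same_sign s_large t_large by (auto simp: zero_less_mult_iff)
  then have "\<bar>s \<bullet> e - t \<bullet> e\<bar> * (2 / real DIM('a)) \<le> 2 * (real DIM('a) - 1) * w"
    using bound by (meson abs_ge_zero mult_left_mono order_trans)
  then have "\<bar>s \<bullet> e - t \<bullet> e\<bar> * (2 / real DIM('a)) * (real DIM('a) / 2)
      \<le> 2 * (real DIM('a) - 1) * w * (real DIM('a) / 2)"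
    by (rule mult_right_mono) simp
  then show ?thesis
    by (simp add: algebra_simps)
qed

lemma norm_diff_le_off_axis_coords:
  fixes s t e :: "'a::euclidean_space"
  assumes "norm s = 1" "norm t = 1" "e \<in> Basis" "0 < (s \<bullet> e) * (t \<bullet> e)"
    and "1 / real DIM('a) \<le> \<bar>s \<bullet> e\<bar>" "1 / real DIM('a) \<le> \<bar>t \<bullet> e\<bar>"
    and close: "\<And>b. b \<in> Basis - {e} \<Longrightarrow> \<bar>s \<bullet> b - t \<bullet> b\<bar> \<le> w"
  shows "norm (s - t) \<le> (real DIM('a) + 1) * (real DIM('a) - 1) * w"
proof -
  have "norm (s - t) \<le> (\<Sum>b\<in>Basis. \<bar>s \<bullet> b - t \<bullet> b\<bar>)"
    using norm_le_l1[of "s - t"] by (simp add: inner_diff_left)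
  also have "\<dots> = \<bar>s \<bullet> e - t \<bullet> e\<bar> + (\<Sum>b\<in>Basis - {e}. \<bar>s \<bullet> b - t \<bullet> b\<bar>)"
    using assms(3) by (simp add: sum.remove)
  also have "\<dots> \<le> real DIM('a) * (real DIM('a) - 1) * w + (\<Sum>b\<in>Basis - {e}. w)"
    using abs_diff_axis_coord_le[OF assms] close by (intro add_mono sum_mono) auto
  also have "\<dots> = (real DIM('a) + 1) * (real DIM('a) - 1) * w"
    using assms(3) by (simp add: card_Diff_singleton of_nat_diff Suc_leI algebra_simps)
  finally show ?thesis .
qed

lemma floor_divide_eq_imp_abs_diff_le:
  fixes x y w :: real
  assumes "0 < w" "\<lfloor>x / w\<rfloor> = \<lfloor>y / w\<rfloor>"
  shows "\<bar>x - y\<bar> \<le> w"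
proof -
  have "\<bar>x / w - y / w\<bar> < 1"
    using assms(2) by linarith
  then show ?thesis
    using assms(1) by (simp add: diff_divide_distrib[symmetric] field_simps)
qed

(* A unit vector whose largest coordinate is the e-th is determined, up to distance
   d (d + 1) w, by the sign of that coordinate and the w-grid cells of the other d - 1
   coordinates. *)
definition grid_cell :: "'a::euclidean_space \<Rightarrow> real \<Rightarrow> 'a \<Rightarrow> bool \<times> ('a \<Rightarrow> int)" where
  "grid_cell e w s = (0 < s \<bullet> e, restrict (\<lambda>b. \<lfloor>s \<bullet> b / w\<rfloor>) (Basis - {e}))"

definition grid_box :: "'a::euclidean_space \<Rightarrow> real \<Rightarrow> 'a \<Rightarrow> real \<Rightarrow> (bool \<times> ('a \<Rightarrow> int)) set" where
  "grid_box e w c R = UNIV \<times> PiE (Basis - {e}) (\<lambda>b. {\<lfloor>(c \<bullet> b - R) / w\<rfloor>..\<lfloor>(c \<bullet> b + R) / w\<rfloor>})"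

lemma dist_lt_if_grid_cell_eq:
  fixes s t e :: "'a::euclidean_space"
  assumes s: "norm s = 1" and t: "norm t = 1" and e: "e \<in> Basis"
    and s_max: "\<And>b. b \<in> Basis \<Longrightarrow> \<bar>s \<bullet> b\<bar> \<le> \<bar>s \<bullet> e\<bar>"
    and t_max: "\<And>b. b \<in> Basis \<Longrightarrow> \<bar>t \<bullet> b\<bar> \<le> \<bar>t \<bullet> e\<bar>"
    and cell: "grid_cell e w s = grid_cell e w t" and w: "0 < w"
  shows "dist s t < real DIM('a) * (real DIM('a) + 1) * w"
proof -
  from cell have sign: "(0 < s \<bullet> e) = (0 < t \<bullet> e)"
    and floors: "restrict (\<lambda>b. \<lfloor>s \<bullet> b / w\<rfloor>) (Basis - {e}) = restrict (\<lambda>b. \<lfloor>t \<bullet> b / w\<rfloor>) (Basis - {e})"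
    by (simp_all add: grid_cell_def)
  have close: "\<bar>s \<bullet> b - t \<bullet> b\<bar> \<le> w" if "b \<in> Basis - {e}" for b
    using fun_cong[OF floors, of b] that by (intro floor_divide_eq_imp_abs_diff_le[OF w]) simp
  have s_large: "1 / real DIM('a) \<le> \<bar>s \<bullet> e\<bar>" and t_large: "1 / real DIM('a) \<le> \<bar>t \<bullet> e\<bar>"
    using max_abs_coord_ge s t e s_max t_max by blast+
  then have "s \<bullet> e \<noteq> 0" "t \<bullet> e \<noteq> 0"
    by auto
  then have same_sign: "0 < (s \<bullet> e) * (t \<bullet> e)"
    using sign by (auto simp: zero_less_mult_iff)
  have "norm (s - t) \<le> (real DIM('a) + 1) * (real DIM('a) - 1) * w"
    using s t e same_sign s_large t_large close by (rule norm_diff_le_off_axis_coords)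
  also have "\<dots> < real DIM('a) * (real DIM('a) + 1) * w"
    using w by (simp add: algebra_simps add_pos_nonneg)
  finally show ?thesis
    by (simp add: dist_norm)
qed

lemma grid_cell_in_grid_box:
  assumes "0 < w" "s \<in> ball c R"
  shows "grid_cell e w s \<in> grid_box e w c R"
proof -
  have "\<lfloor>s \<bullet> b / w\<rfloor> \<in> {\<lfloor>(c \<bullet> b - R) / w\<rfloor>..\<lfloor>(c \<bullet> b + R) / w\<rfloor>}" if "b \<in> Basis" for b
  proof -
    have "\<bar>s \<bullet> b - c \<bullet> b\<bar> < R"
      using assms(2) Basis_le_norm[OF that, of "s - c"]
      by (auto simp: dist_norm inner_diff_left norm_minus_commute)
    then have "c \<bullet> b - R \<le> s \<bullet> b" "s \<bullet> b \<le> c \<bullet> b + R"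
      by (simp_all add: abs_less_iff)
    then have "(c \<bullet> b - R) / w \<le> s \<bullet> b / w" "s \<bullet> b / w \<le> (c \<bullet> b + R) / w"
      using assms(1) by (simp_all add: divide_right_mono)
    then show ?thesis
      by (simp add: floor_mono)
  qed
  then show ?thesis
    by (simp add: grid_cell_def grid_box_def restrict_PiE_iff)
qed

lemma finite_grid_box: "finite (grid_box e w c R)"
  by (simp add: grid_box_def finite_PiE)

lemma card_floor_interval_le:
  fixes a R w :: real
  assumes "0 < w" "2 * w \<le> R"
  shows "real (card {\<lfloor>(a - R) / w\<rfloor>..\<lfloor>(a + R) / w\<rfloor>}) \<le> 3 * R / w"
proof -
  have "real_of_int (\<lfloor>(a + R) / w\<rfloor> - \<lfloor>(a - R) / w\<rfloor> + 1) \<le> (a + R) / w - (a - R) / w + 2"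
    by linarith
  also have "\<dots> = 2 * R / w + 2"
    by (simp add: diff_divide_distrib[symmetric])
  also have "\<dots> \<le> 3 * R / w"
    using assms by (simp add: field_simps)
  moreover have "0 < 3 * R / w"
    using assms by simp
  ultimately show ?thesis
    by (cases "0 \<le> \<lfloor>(a + R) / w\<rfloor> - \<lfloor>(a - R) / w\<rfloor> + 1") auto
qed

lemma card_grid_box_le:
  fixes e :: "'a::euclidean_space"
  assumes "0 < w" "2 * w \<le> R" "e \<in> Basis"
  shows "real (card (grid_box e w c R)) \<le> 2 * (3 * R / w) ^ (DIM('a) - 1)"
proof -
  have "card (grid_box e w c R) = 2 * (\<Prod>b\<in>Basis - {e}. card {\<lfloor>(c \<bullet> b - R) / w\<rfloor>..\<lfloor>(c \<bullet> b + R) / w\<rfloor>})"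
    by (simp add: grid_box_def card_cartesian_product card_PiE del: card_atLeastAtMost_int)
  then have "real (card (grid_box e w c R))
      = 2 * (\<Prod>b\<in>Basis - {e}. real (card {\<lfloor>(c \<bullet> b - R) / w\<rfloor>..\<lfloor>(c \<bullet> b + R) / w\<rfloor>}))"
    by (simp only: of_nat_mult of_nat_prod of_nat_numeral)
  also have "\<dots> \<le> 2 * (\<Prod>b\<in>Basis - {e}. 3 * R / w)"
    using card_floor_interval_le[OF assms(1,2)]
    by (intro mult_left_mono prod_mono) (simp_all del: card_atLeastAtMost_int)
  also have "\<dots> = 2 * (3 * R / w) ^ (DIM('a) - 1)"
    using assms(3) by (simp add: card_Diff_singleton)
  finally show ?thesis .
qed

lemma card_separated_chart_le:
  fixes T :: "'a::euclidean_space set" and c e :: 'a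
  assumes T: "T \<subseteq> sphere 0 1 \<inter> ball c R" and e: "e \<in> Basis"
    and max: "\<And>s b. s \<in> T \<Longrightarrow> b \<in> Basis \<Longrightarrow> \<bar>s \<bullet> b\<bar> \<le> \<bar>s \<bullet> e\<bar>"
    and sep: "\<And>s t. s \<in> T \<Longrightarrow> t \<in> T \<Longrightarrow> s \<noteq> t \<Longrightarrow> \<epsilon> \<le> dist s t"
    and \<epsilon>: "0 < \<epsilon>" "\<epsilon> \<le> R"
  shows "real (card T) \<le> 2 * (3 * real DIM('a) * (real DIM('a) + 1) * (R / \<epsilon>)) ^ (DIM('a) - 1)"
proof -
  define w where "w = \<epsilon> / (real DIM('a) * (real DIM('a) + 1))"
  have w: "0 < w" "real DIM('a) * (real DIM('a) + 1) * w = \<epsilon>"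
    using \<epsilon> by (simp_all add: w_def)
  have "2 \<le> real DIM('a) * (real DIM('a) + 1)"
    using mult_mono[of 1 "real DIM('a)" 2 "real DIM('a) + 1"] by (simp add: Suc_leI)
  then have "2 * w \<le> real DIM('a) * (real DIM('a) + 1) * w"
    using w by (intro mult_right_mono) auto
  then have "2 * w \<le> R"
    using w \<epsilon> by simp
  have "inj_on (grid_cell e w) T"
  proof (rule inj_onI)
    fix s t assume st: "s \<in> T" "t \<in> T" "grid_cell e w s = grid_cell e w t"
    then have "dist s t < real DIM('a) * (real DIM('a) + 1) * w"
      using T by (intro dist_lt_if_grid_cell_eq[OF _ _ e max max _ w(1)]) auto
    then show "s = t"
      using sep st w(2) by force
  qed
  moreover have "grid_cell e w ` T \<subseteq> grid_box e w c R"
    using T w(1) by (intro image_subsetI grid_cell_in_grid_box) auto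
  ultimately have "card T \<le> card (grid_box e w c R)"
    using finite_grid_box by (rule card_inj_on_le)
  then have "real (card T) \<le> 2 * (3 * R / w) ^ (DIM('a) - 1)"
    using card_grid_box_le[OF w(1) \<open>2 * w \<le> R\<close> e, of c] by linarith
  also have "\<dots> = 2 * (3 * real DIM('a) * (real DIM('a) + 1) * (R / \<epsilon>)) ^ (DIM('a) - 1)"
    by (simp add: w_def mult_ac)
  finally show ?thesis .
qed

lemma card_separated_sphere_ball_le:
  fixes S :: "'a::euclidean_space set"
  assumes "S \<subseteq> sphere 0 1"
    and sep: "\<And>s t. s \<in> S \<Longrightarrow> t \<in> S \<Longrightarrow> s \<noteq> t \<Longrightarrow> \<epsilon> \<le> dist s t"
    and "0 < \<epsilon>" "\<epsilon> \<le> R"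
  shows "real (card (S \<inter> ball c R)) \<le> packing_const DIM('a) * (R / \<epsilon>) ^ (DIM('a) - 1)"
proof -
  define chart where "chart e = {s \<in> S \<inter> ball c R. \<forall>b\<in>Basis. \<bar>s \<bullet> b\<bar> \<le> \<bar>s \<bullet> e\<bar>}" for e
  have "S \<inter> ball c R \<subseteq> (\<Union>e\<in>Basis. chart e)"
  proof
    fix s assume "s \<in> S \<inter> ball c R"
    moreover obtain e where "e \<in> Basis" "\<forall>b\<in>Basis. \<bar>s \<bullet> b\<bar> \<le> \<bar>s \<bullet> e\<bar>"
      by (rule exists_max_abs_coord)
    ultimately show "s \<in> (\<Union>e\<in>Basis. chart e)"
      by (auto simp: chart_def)
  qed
  then have "S \<inter> ball c R = (\<Union>e\<in>Basis. chart e)"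
    by (auto simp: chart_def)
  then have "card (S \<inter> ball c R) \<le> (\<Sum>e\<in>Basis. card (chart e))"
    by (simp add: card_UN_le)
  then have "real (card (S \<inter> ball c R)) \<le> (\<Sum>e\<in>Basis. real (card (chart e)))"
    by (metis of_nat_le_iff of_nat_sum)
  also have "\<dots> \<le> (\<Sum>e\<in>(Basis::'a set). 2 * (3 * real DIM('a) * (real DIM('a) + 1) * (R / \<epsilon>)) ^ (DIM('a) - 1))"
    using assms by (intro sum_mono card_separated_chart_le) (auto simp: chart_def)
  also have "\<dots> = packing_const DIM('a) * (R / \<epsilon>) ^ (DIM('a) - 1)"
    unfolding packing_const_def power_mult_distrib by (simp add: mult_ac)
  finally show ?thesis .
qed

lemma mem_coneL_iff: "x \<in> coneL y \<zeta> \<longleftrightarrow> x \<noteq> 0 \<and> x /\<^sub>R norm x \<in> capQ y \<zeta>"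
proof
  assume "x \<in> coneL y \<zeta>"
  then obtain r q where "x = r *\<^sub>R q" "q \<in> capQ y \<zeta>" "0 < r"
    unfolding coneL_def by auto
  then show "x \<noteq> 0 \<and> x /\<^sub>R norm x \<in> capQ y \<zeta>"
    by (auto simp: capQ_def)
next
  assume "x \<noteq> 0 \<and> x /\<^sub>R norm x \<in> capQ y \<zeta>"
  then show "x \<in> coneL y \<zeta>"
    unfolding coneL_def by (intro CollectI exI[of _ "norm x"] exI[of _ "x /\<^sub>R norm x"]) auto
qed

lemma open_coneL: "open (coneL y \<zeta>)"
proof -
  have "coneL y \<zeta> = - {0} \<inter> (\<lambda>x. x /\<^sub>R norm x) -` ball y \<zeta>"
    by (auto simp: mem_coneL_iff capQ_def) (metis left_inverse norm_eq_zero)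
  moreover have "open (- {0} \<inter> (\<lambda>x. x /\<^sub>R norm x) -` ball y \<zeta>)"
    by (rule continuous_open_preimage) (auto intro!: continuous_intros)
  ultimately show ?thesis
    by simp
qed

lemma coneL_mono: "ball y \<zeta> \<subseteq> ball y' \<zeta>' \<Longrightarrow> coneL y \<zeta> \<subseteq> coneL y' \<zeta>'"
  unfolding coneL_def capQ_def by blast

lemma disjnt_coneL: "disjnt (ball y \<zeta>) (ball y' \<zeta>') \<Longrightarrow> disjnt (coneL y \<zeta>) (coneL y' \<zeta>')"
  by (auto simp: disjnt_def mem_coneL_iff capQ_def)

definition energy_measure :: "real \<Rightarrow> 'a::euclidean_space set \<Rightarrow> ('a \<Rightarrow> 'a) \<Rightarrow> 'a measure" where
  "energy_measure p \<Omega> g = density lborel (\<lambda>x. ennreal (norm (indicator \<Omega> x *\<^sub>R g x) powr p))"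

lemma cone_energy_eq_emeasure:
  assumes "set_borel_measurable lborel \<Omega> g"
  shows "cone_energy p \<Omega> g y \<zeta> = emeasure (energy_measure p \<Omega> g) (coneL y \<zeta>)"
proof -
  have "(\<lambda>x. indicator \<Omega> x *\<^sub>R g x) \<in> borel_measurable lborel"
    using assms unfolding set_borel_measurable_def .
  then have "(\<lambda>x. ennreal (norm (indicator \<Omega> x *\<^sub>R g x) powr p)) \<in> borel_measurable lborel"
    by measurable
  then show ?thesis
    unfolding energy_measure_def cone_energy_def
    by (subst emeasure_density) (auto simp: borel_open open_coneL intro!: nn_integral_cong split: split_indicator)
qed

lemma sum_cone_energy_le:
  assumes g: "set_borel_measurable lborel \<Omega> g" and "finite I"
    and disjoint: "pairwise (\<lambda>i j. disjnt (ball i (r i)) (ball j (r j))) I"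
    and inside: "\<And>i. i \<in> I \<Longrightarrow> ball i (r i) \<subseteq> ball y \<zeta>"
  shows "(\<Sum>i\<in>I. cone_energy p \<Omega> g i (r i)) \<le> cone_energy p \<Omega> g y \<zeta>"
proof -
  have sets_energy: "sets (energy_measure p \<Omega> g) = sets borel"
    by (simp add: energy_measure_def)
  have "disjoint_family_on (\<lambda>i. coneL i (r i)) I"
    using disjoint unfolding pairwise_def disjoint_family_on_def by (metis disjnt_coneL disjnt_def)
  then have "(\<Sum>i\<in>I. cone_energy p \<Omega> g i (r i)) = emeasure (energy_measure p \<Omega> g) (\<Union>i\<in>I. coneL i (r i))"
    unfolding cone_energy_eq_emeasure[OF g] using \<open>finite I\<close>
    by (intro sum_emeasure) (auto simp: sets_energy borel_open open_coneL)
  also have "\<dots> \<le> emeasure (energy_measure p \<Omega> g) (coneL y \<zeta>)"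
    using coneL_mono[OF inside] by (intro emeasure_mono UN_least) (auto simp: sets_energy borel_open open_coneL)
  finally show ?thesis
    by (simp add: cone_energy_eq_emeasure[OF g])
qed

lemma card_covered_by_balls_le:
  fixes B :: "'a::euclidean_space set"
  assumes "B \<subseteq> sphere 0 1"
    and "\<And>s t. s \<in> B \<Longrightarrow> t \<in> B \<Longrightarrow> s \<noteq> t \<Longrightarrow> \<epsilon> \<le> dist s t"
    and "0 < \<epsilon>" "finite I" and cover: "B \<subseteq> (\<Union>i\<in>I. ball i (r i))"
    and "\<And>i. i \<in> I \<Longrightarrow> \<epsilon> \<le> r i"
  shows "real (card B) \<le> packing_const DIM('a) * (\<Sum>i\<in>I. (r i / \<epsilon>) ^ (DIM('a) - 1))"
proof -
  have "B = (\<Union>i\<in>I. B \<inter> ball i (r i))"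
    using cover by blast
  then have "card B \<le> (\<Sum>i\<in>I. card (B \<inter> ball i (r i)))"
    using card_UN_le[OF \<open>finite I\<close>] by metis
  then have "real (card B) \<le> (\<Sum>i\<in>I. real (card (B \<inter> ball i (r i))))"
    by (metis of_nat_le_iff of_nat_sum)
  also have "\<dots> \<le> (\<Sum>i\<in>I. packing_const DIM('a) * (r i / \<epsilon>) ^ (DIM('a) - 1))"
    using assms by (intro sum_mono card_separated_sphere_ball_le) auto
  finally show ?thesis
    by (simp add: sum_distrib_left)
qed

lemma power_le_powr_mult_powr_diff:
  fixes x \<delta> \<beta> :: real
  assumes "0 < x" "x \<le> \<delta>" "0 \<le> \<beta>"
  shows "x ^ n \<le> \<delta> powr \<beta> * x powr (real n - \<beta>)"
proof -
  have "x ^ n = x powr \<beta> * x powr (real n - \<beta>)"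
    using assms(1) by (simp add: powr_add[symmetric] powr_realpow)
  also have "\<dots> \<le> \<delta> powr \<beta> * x powr (real n - \<beta>)"
    using assms by (intro mult_right_mono powr_mono2) auto
  finally show ?thesis .
qed

lemma sum_powr_le_cone_energy:
  assumes g: "set_borel_measurable lborel \<Omega> g" and "finite I" and "I \<subseteq> capQ y \<delta>"
    and disjoint: "pairwise (\<lambda>i j. disjnt (ball i (r i)) (ball j (r j))) I"
    and r: "\<And>i. i \<in> I \<Longrightarrow> r i \<le> \<delta> \<and> ennreal (r i powr a) < cone_energy p \<Omega> g i (r i)"
    and energy: "cone_energy p \<Omega> g y (2 * \<delta>) \<le> ennreal E" and "0 \<le> E"
  shows "(\<Sum>i\<in>I. r i powr a) \<le> E"
proof -
  have "ennreal (\<Sum>i\<in>I. r i powr a) = (\<Sum>i\<in>I. ennreal (r i powr a))"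
    by (simp add: sum_ennreal)
  also have "\<dots> \<le> (\<Sum>i\<in>I. cone_energy p \<Omega> g i (r i))"
    using r by (intro sum_mono less_imp_le) auto
  also have "\<dots> \<le> cone_energy p \<Omega> g y (2 * \<delta>)"
  proof (rule sum_cone_energy_le[OF g \<open>finite I\<close> disjoint])
    fix i assume "i \<in> I"
    then have "dist i y + r i \<le> 2 * \<delta>"
      using \<open>I \<subseteq> capQ y \<delta>\<close> r by (force simp: capQ_def dist_commute)
    then show "ball i (r i) \<subseteq> ball y (2 * \<delta>)"
      by (simp add: ball_subset_ball_iff)
  qed
  also have "\<dots> \<le> ennreal E"
    by (rule energy)
  finally show ?thesis
    using \<open>0 \<le> E\<close> by (simp add: ennreal_le_iff)
qed

lemma card_bad_anchors_le:
  fixes S :: "'a::euclidean_space set" and \<Omega> :: "'a set" and g :: "'a \<Rightarrow> 'a"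
  assumes "0 \<le> \<beta>" "0 < \<epsilon>" "\<epsilon> \<le> \<delta>" "finite S" "S \<subseteq> sphere 0 1"
    and sep: "\<And>s t. s \<in> S \<Longrightarrow> t \<in> S \<Longrightarrow> s \<noteq> t \<Longrightarrow> \<epsilon> \<le> dist s t"
    and g: "set_borel_measurable lborel \<Omega> g"
    and energy: "cone_energy p \<Omega> g y (2 * \<delta>) \<le> ennreal E" and "0 \<le> E"
  shows "real (card (bad_anchors p \<Omega> g S \<epsilon> \<delta> \<beta> \<inter> capQ y \<delta>))
    \<le> packing_const DIM('a) * 5 ^ (DIM('a) - 1) * \<delta> powr \<beta> / \<epsilon> ^ (DIM('a) - 1) * E"
proof -
  define n where "n = DIM('a) - 1"
  define B where "B = bad_anchors p \<Omega> g S \<epsilon> \<delta> \<beta> \<inter> capQ y \<delta>"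
  have "\<forall>s\<in>B. \<exists>\<zeta>. \<epsilon> \<le> \<zeta> \<and> \<zeta> \<le> \<delta> \<and> ennreal (\<zeta> powr (real n - \<beta>)) < cone_energy p \<Omega> g s \<zeta>"
    by (auto simp: B_def bad_anchors_def n_def of_nat_diff Suc_leI)
  then obtain r where r: "\<And>s. s \<in> B \<Longrightarrow>
      \<epsilon> \<le> r s \<and> r s \<le> \<delta> \<and> ennreal (r s powr (real n - \<beta>)) < cone_energy p \<Omega> g s (r s)"
    by metis
  obtain I where I: "I \<subseteq> B" "pairwise (\<lambda>i j. disjnt (ball i (r i)) (ball j (r j))) I"
      "B \<subseteq> (\<Union>i\<in>I. ball i (5 * r i))"
    using Vitali_covering_lemma_balls[where S=B and K=B and a="\<lambda>s. s" and r=r and B=\<delta>] r \<open>0 < \<epsilon>\<close>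
    by (metis (no_types, lifting) UN_I centre_in_ball order_less_le_trans subsetI)
  have "B \<subseteq> S"
    by (auto simp: B_def bad_anchors_def)
  then have "finite I"
    using I(1) \<open>finite S\<close> by (meson finite_subset subset_trans)
  have "\<epsilon> \<le> 5 * r i" if "i \<in> I" for i
    using r[of i] I(1) that \<open>0 < \<epsilon>\<close> by force
  then have "real (card B) \<le> packing_const DIM('a) * (\<Sum>i\<in>I. (5 * r i / \<epsilon>) ^ n)"
    unfolding n_def using \<open>B \<subseteq> S\<close> assms(2,5) I(3) \<open>finite I\<close>
    by (intro card_covered_by_balls_le) (auto intro: sep)
  also have "\<dots> \<le> packing_const DIM('a) * (\<Sum>i\<in>I. 5 ^ n * \<delta> powr \<beta> / \<epsilon> ^ n * r i powr (real n - \<beta>))"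
  proof (rule mult_left_mono[OF sum_mono])
    fix i assume "i \<in> I"
    then have "0 < r i" "r i \<le> \<delta>"
      using I(1) r \<open>0 < \<epsilon>\<close> by force+
    then have "r i ^ n \<le> \<delta> powr \<beta> * r i powr (real n - \<beta>)"
      using \<open>0 \<le> \<beta>\<close> by (rule power_le_powr_mult_powr_diff)
    then show "(5 * r i / \<epsilon>) ^ n \<le> 5 ^ n * \<delta> powr \<beta> / \<epsilon> ^ n * r i powr (real n - \<beta>)"
      using \<open>0 < \<epsilon>\<close> by (simp add: power_divide power_mult_distrib field_simps)
  qed (rule packing_const_nonneg)
  also have "\<dots> = packing_const DIM('a) * 5 ^ n * \<delta> powr \<beta> / \<epsilon> ^ n * (\<Sum>i\<in>I. r i powr (real n - \<beta>))"
    by (simp add: sum_distrib_left sum_divide_distrib mult_ac)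
  also have "\<dots> \<le> packing_const DIM('a) * 5 ^ n * \<delta> powr \<beta> / \<epsilon> ^ n * E"
  proof (rule mult_left_mono)
    show "(\<Sum>i\<in>I. r i powr (real n - \<beta>)) \<le> E"
      using I(1) r
      by (intro sum_powr_le_cone_energy[OF g \<open>finite I\<close> _ I(2) _ energy \<open>0 \<le> E\<close>]) (auto simp: B_def)
  qed (use \<open>0 < \<epsilon>\<close> in \<open>simp add: packing_const_nonneg\<close>)
  finally show ?thesis
    by (simp add: B_def n_def)
qed

theorem lemma3p4:
  fixes p :: real
  assumes "DIM('a::euclidean_space) \<ge> 2" and "1 < p" and "p < real DIM('a)"
  shows "\<exists>C>0. \<forall>(\<delta>::real) (\<epsilon>::real) (S::'a set) (K::'a \<Rightarrow> 'a set) (\<alpha>::real)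
            (u::'a \<Rightarrow> real) (g::'a \<Rightarrow> 'a) (y::'a) (M::real).
     0 < \<delta> \<and> \<delta> < 1/20 \<and> 0 < \<epsilon> \<and> \<epsilon> < \<delta>/20 \<and>
     finite S \<and> S \<subseteq> sphere 0 1 \<and> (\<forall>s\<in>S. \<forall>t\<in>S. s \<noteq> t \<longrightarrow> \<epsilon> \<le> dist s t) \<and>
     (\<forall>s\<in>S. compact (K s) \<and> K s \<subseteq> cball 0 1) \<and> 0 < \<alpha> \<and> \<alpha> \<le> 1/80 \<and>
     perron_solution p (- Gamma_set S K \<alpha> \<epsilon>) (\<lambda>_. 1) 0 u \<and>
     (\<forall>x\<in>Gamma_set S K \<alpha> \<epsilon>. u x = 1) \<and>
     weak_gradient (- Gamma_set S K \<alpha> \<epsilon>) u g \<and>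
     y \<in> sphere 0 1 \<and> 0 < M \<and>
     cone_energy p (- Gamma_set S K \<alpha> \<epsilon>) g y (2 * \<delta>) \<le> ennreal (M * \<delta> ^ (DIM('a) - 1))
     \<longrightarrow> real (card (bad_anchors p (- Gamma_set S K \<alpha> \<epsilon>) g S \<epsilon> \<delta> ((p - 1) / (2 * p)) \<inter> capQ y \<delta>))
         \<le> C * M * \<delta> powr ((p - 1) / (2 * p)) * (\<delta> / \<epsilon>) ^ (DIM('a) - 1)"
proof -
  define C where "C = packing_const DIM('a) * 5 ^ (DIM('a) - 1)"
  have bound: "real (card (bad_anchors p \<Omega> g S \<epsilon> \<delta> ((p - 1) / (2 * p)) \<inter> capQ y \<delta>))
      \<le> C * M * \<delta> powr ((p - 1) / (2 * p)) * (\<delta> / \<epsilon>) ^ (DIM('a) - 1)"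
    if "0 < \<epsilon>" "\<epsilon> \<le> \<delta>" "finite S" "S \<subseteq> sphere 0 1" "\<forall>s\<in>S. \<forall>t\<in>S. s \<noteq> t \<longrightarrow> \<epsilon> \<le> dist s t"
      "weak_gradient \<Omega> u g" "cone_energy p \<Omega> g y (2 * \<delta>) \<le> ennreal (M * \<delta> ^ (DIM('a) - 1))" "0 < M"
    for \<delta> \<epsilon> :: real and S \<Omega> :: "'a set" and u g y M
  proof -
    have "real (card (bad_anchors p \<Omega> g S \<epsilon> \<delta> ((p - 1) / (2 * p)) \<inter> capQ y \<delta>))
        \<le> C * \<delta> powr ((p - 1) / (2 * p)) / \<epsilon> ^ (DIM('a) - 1) * (M * \<delta> ^ (DIM('a) - 1))"
      unfolding C_def using that \<open>1 < p\<close>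
      by (intro card_bad_anchors_le) (auto simp: weak_gradient_def)
    also have "\<dots> = C * M * \<delta> powr ((p - 1) / (2 * p)) * (\<delta> / \<epsilon>) ^ (DIM('a) - 1)"
      by (simp add: power_divide)
    finally show ?thesis .
  qed
  show ?thesis
  proof (intro exI[of _ C] conjI allI impI)
    show "0 < C"
      by (simp add: C_def packing_const_def)
  qed (elim conjE, rule bound, auto)
qed

end
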